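(* Let $r_A^{(1)}, r_B^{(1)}, r_A^{(2)}, r_B^{(2)} > 0$ be the initial reserves of two zero-fee constant-product pools $P_1, P_2$ trading assets $A$ and $B$, and let $a>0$. Then there exist $x \in (0, r_A^{(2)})$ and $y>0$ such that the following four-step atomic sequence is well defined and realizes the migration of exactly $a$ units of $A$. \begin{enumerate} \item Step 1: $x+a$ units of $A$ are input to $P_1$, which outputs $b=\dfrac{r_B^{(1)}(x+a)}{r_A^{(1)}+x+a}$ units of $B$. Of this input, $a$ units come from the principal and $x$ units come from flash liquidity. \item Step 2: the $b$ units of $B$ are input to $P_2$, which outputs exactly $x$ units of $A$; these repay the flash liquidity. This step requires \[ b=\frac{r_B^{(2)}x}{r_A^{(2)}-x}, \] equivalently the consistency condition \[ r_B^{(1)}(x+a)(r_A^{(2)}-x)=r_B^{(2)}x\,(r_A^{(1)}+x+a). \] \item Step 3: $y$ units of $A$ are input to $P_2$, now in state $(r_A^{(2)}-x,\ r_B^{(2)}+b)$, which outputs \[ b'=\frac{r_A^{(2)}r_B^{(2)}y}{(r_A^{(2)}-x)(r_A^{(2)}-x+y)} \] units of $B$. \item Step 4: the $b'$ units of $B$ are input to $P_1$, now in state $(r_A^{(1)}+x+a,\ r_B^{(1)}-b)$, which outputs \[ y+a'=\frac{(r_A^{(1)}+x+a)\,b'}{r_B^{(1)}-b+b'} \] units of $A$. Of this output, $y$ units repay Step 3 and $a'$ units go to the beneficiary. \end{enumerate} For these $x$ and $y$, one has $a'=a$. Consequently, over the whole sequence, the principal's balance of $A$ changes by $-a$ and the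 beneficiary's balance of $A$ changes by $+a$.
   Context: Model conventions: \begin{itemize} \item A zero-fee constant-product pool $i$ with reserves $(r_A^{(i)}, r_B^{(i)})$ keeps the product $r_A^{(i)} r_B^{(i)}=k_i$ invariant under every swap. Inputting $\delta$ of one asset therefore outputs the amount of the other asset that keeps this product unchanged. \item Each step updates the reserves of the pool it acts on, and later steps use the updated reserves. \item The principal supplies the $a$ units of $A$. \item The beneficiary receives the $a'$ units of $A$. \item Flash liquidity of $x$ units of $A$ must be repaid within the same atomic execution. \end{itemize} *)

theory Defs
  imports Complex_Main
begin

text \<open>Zero-fee constant-product swap: a pool with reserves rin (of the input asset)
and rout (of the output asset) receives d units of the input asset and outputs the
amount o of the output asset that keeps the product invariant:
(rin + d) * (rout - o) = rin * rout.\<close>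
definition cp_out :: "real \<Rightarrow> real \<Rightarrow> real \<Rightarrow> real" where
  "cp_out rin rout d = rout - (rin * rout) / (rin + d)"

end

theory Submission
  imports Defs
begin

text \<open>Choose the flash amount x so that selling x + a units of A to P1 yields exactly the B
needed to buy x units of A back from P2; such an x exists by the intermediate value theorem.
Then take y = x: Step 3 undoes Step 2 and Step 4 undoes Step 1, so both pools return to their
initial reserves and Step 4 pays out x + a, of which x repays Step 3 and a reaches the
beneficiary.\<close>

lemma cp_out_eq:
  assumes "rin + d \<noteq> 0"
  shows "cp_out rin rout d = rout * d / (rin + d)"
  using assms by (simp add: cp_out_def field_simps)

lemma cp_out_pos_less:
  assumes "rin > 0" "rout > 0" "d > 0"
  shows "0 < cp_out rin rout d" "cp_out rin rout d < rout"
proof -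
  have "rout * d < rout * (rin + d)"
    using assms by simp
  then show "0 < cp_out rin rout d" "cp_out rin rout d < rout"
    using assms by (simp_all add: cp_out_eq divide_less_eq)
qed

lemma cp_out_inverse:
  assumes "rin > 0" "rout > 0" "out < rout"
  shows "cp_out rin rout (rin * out / (rout - out)) = out"
proof -
  have "rin + rin * out / (rout - out) = rin * rout / (rout - out)"
    using assms by (simp add: field_simps)
  then show ?thesis
    using assms by (simp add: cp_out_def)
qed

lemma cp_out_swap_back:
  assumes "rin + d \<noteq> 0" "rout \<noteq> 0"
  shows "cp_out (rout - cp_out rin rout d) (rin + d) (cp_out rin rout d) = d"
proof -
  have "rout - cp_out rin rout d = rin * rout / (rin + d)"
    by (simp add: cp_out_def)
  moreover have "rin * rout / (rin + d) + cp_out rin rout d = rout"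
    using assms by (simp add: cp_out_eq add_divide_distrib [symmetric] field_simps)
  ultimately show ?thesis
    using assms by (simp add: cp_out_def)
qed

lemma flash_amount_exists:
  fixes rA1 rB1 rA2 rB2 a :: real
  assumes "rA1 > 0" "rB1 > 0" "rA2 > 0" "rB2 > 0" "a > 0"
  obtains x where "0 < x" "x < rA2"
    "rB1 * (x + a) * (rA2 - x) = rB2 * x * (rA1 + x + a)"
proof -
  define f where "f x = rB1 * (x + a) * (rA2 - x) - rB2 * x * (rA1 + x + a)" for x
  have "continuous_on {0..rA2} f"
    unfolding f_def by (intro continuous_intros)
  moreover have "f 0 > 0" "f rA2 < 0"
    using assms by (simp_all add: f_def)
  ultimately obtain x where "0 \<le> x" "x \<le> rA2" "f x = 0"
    using IVT2'[of f rA2 0 0] assms by force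
  moreover from \<open>f 0 > 0\<close> \<open>f rA2 < 0\<close> \<open>f x = 0\<close> have "x \<noteq> 0" "x \<noteq> rA2"
    by auto
  ultimately have "0 < x" "x < rA2" "f x = 0"
    by simp_all
  then show thesis
    using that by (simp add: f_def)
qed

theorem mainTheorem1:
  fixes rA1 rB1 rA2 rB2 a :: real
  assumes "rA1 > 0" "rB1 > 0" "rA2 > 0" "rB2 > 0" "a > 0"
  shows "\<exists>x y. 0 < x \<and> x < rA2 \<and> 0 < y \<and>
    (let
       \<comment> \<open>Step 1: x + a units of A into P1 (state (rA1, rB1))\<close>
       b = cp_out rA1 rB1 (x + a);
       \<comment> \<open>Step 2: b units of B into P2 (state (rA2, rB2)), outputs x2 units of A\<close>
       x2 = cp_out rB2 rA2 b;
       \<comment> \<open>Step 3: y units of A into P2 (state (rA2 - x2, rB2 + b))\<close>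
       b' = cp_out (rA2 - x2) (rB2 + b) y;
       \<comment> \<open>Step 4: b' units of B into P1 (state (rA1 + x + a, rB1 - b))\<close>
       out4 = cp_out (rB1 - b) (rA1 + x + a) b';
       a' = out4 - y
     in
       b = rB1 * (x + a) / (rA1 + x + a) \<and>
       0 < b \<and> b < rB1 \<and>
       x2 = x \<and>
       b = rB2 * x / (rA2 - x) \<and>
       rB1 * (x + a) * (rA2 - x) = rB2 * x * (rA1 + x + a) \<and>
       b' = rA2 * rB2 * y / ((rA2 - x) * (rA2 - x + y)) \<and>
       0 < b' \<and>
       out4 = (rA1 + x + a) * b' / (rB1 - b + b') \<and>
       y < out4 \<and>
       a' = a)"
proof -
  obtain x where x: "0 < x" "x < rA2"
    and balance: "rB1 * (x + a) * (rA2 - x) = rB2 * x * (rA1 + x + a)"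
    using flash_amount_exists assms by blast
  define b where "b = cp_out rA1 rB1 (x + a)"
  have b_P1: "b = rB1 * (x + a) / (rA1 + x + a)"
    using assms x by (simp add: b_def cp_out_eq add.assoc)
  have reserves_P1: "(rA1 + x + a) * b = rB1 * (x + a)"
    using b_P1 assms x by simp
  then have "(rA1 + x + a) * (b * (rA2 - x)) = (rA1 + x + a) * (rB2 * x)"
    using balance by (metis mult.assoc mult.commute)
  then have "b * (rA2 - x) = rB2 * x"
    using assms x by simp
  then have b_P2: "b = rB2 * x / (rA2 - x)"
    using x by (simp add: eq_divide_eq)
  have b_range: "0 < b" "b < rB1"
    using cp_out_pos_less[of rA1 rB1 "x + a"] assms x by (simp_all add: b_def)
  have step2: "cp_out rB2 rA2 b = x"
    using cp_out_inverse[of rB2 rA2 x] b_P2 assms x by simp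
  have step3: "cp_out (rA2 - x) (rB2 + b) x = b"
    using cp_out_swap_back[of rB2 b rA2] step2 assms b_range by simp
  have step4: "cp_out (rB1 - b) (rA1 + x + a) b = x + a"
    using cp_out_swap_back[of rA1 "x + a" rB1] assms x by (simp add: b_def add.assoc)
  have step3_formula: "b = rA2 * rB2 * x / ((rA2 - x) * (rA2 - x + x))"
    using b_P2 assms by simp
  have step4_formula: "x + a = (rA1 + x + a) * b / (rB1 - b + b)"
    using reserves_P1 assms by simp
  have "x < x + a" "x + a - x = a"
    using assms by simp_all
  show ?thesis
    apply (intro exI[of _ x])
    unfolding Let_def b_def [symmetric] step2 step3 step4
    using x balance b_P1 b_P2 b_range step3_formula step4_formula \<open>x < x + a\<close> \<open>x + a - x = a\<close>
    by blast
qed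

end
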